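(* Let $n\ge 2$, $c\ge 1$, $\Delta>0$, and let $V'$ be a family of at most $n$ vectors in $\mathbb{R}^d$, each of Euclidean length in $[n^{-2},2\sqrt n]$, such that every vertex has expected degree at most $c$ in $G\sim\mathcal{G}_{V'}$ and the expected number of triangles in $G\sim\mathcal{G}_{V'}$ is at least $\Delta n/2$. For each integer $r$ let $V_r=\{\vec v\in V': \|\vec v\|_2\in[2^r,2^{r+1})\}$, let $R=\{r: |V_r|\ge (\Delta/60c^2)(n/\lg n)\}$, and let $V''=\bigcup_{r\in R}V_r$. Then the expected number of triangles in $G\sim\mathcal{G}_{V''}$ is at least $\Delta n/8$.
   Context: For a finite family of vectors $W=(\vec w_i)_{i\in I}$ in $\mathbb{R}^d$, $\mathcal{G}_W$ is the distribution on simple undirected graphs with vertex set $I$ in which, independently for each unordered pair $\{i,j\}$ with $i\neq j$, the edge $(i,j)$ is present with probability $\max(0,\min(\vec w_i\cdot\vec w_j,1))$. The expected degree of $i$ is $\sum_{j\ne i}\max(0,\min(\vec w_i\cdot\vec w_j,1))$. A triangle is a set of three distinct pairwise adjacent vertices. $\lg$ is the base-2 logarithm. *)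

theory Defs
  imports "HOL-Analysis.Analysis" "HOL-Probability.Probability"
begin

definition edge_prob :: "('i \<Rightarrow> 'v::real_inner) \<Rightarrow> 'i \<Rightarrow> 'i \<Rightarrow> real" where
  "edge_prob w i j = max 0 (min (w i \<bullet> w j) 1)"

definition expected_degree :: "'i set \<Rightarrow> ('i \<Rightarrow> 'v::real_inner) \<Rightarrow> 'i \<Rightarrow> real" where
  "expected_degree I w i = (\<Sum>j\<in>I - {i}. edge_prob w i j)"

definition vpairs :: "'i set \<Rightarrow> 'i set set" where
  "vpairs I = {e. e \<subseteq> I \<and> card e = 2}"

text \<open>Probability of an unordered pair (well defined since edge_prob is symmetric).\<close>
definition pair_prob :: "('i \<Rightarrow> 'v::real_inner) \<Rightarrow> 'i set \<Rightarrow> real" where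
  "pair_prob w e = (let i = (SOME i. i \<in> e); j = (SOME j. j \<in> e \<and> j \<noteq> i) in edge_prob w i j)"

definition random_graph :: "'i set \<Rightarrow> ('i \<Rightarrow> 'v::real_inner) \<Rightarrow> 'i set set pmf" where
  "random_graph I w =
     map_pmf (\<lambda>f. {e \<in> vpairs I. f e})
       (Pi_pmf (vpairs I) False (\<lambda>e. bernoulli_pmf (pair_prob w e)))"

definition num_triangles :: "'i set \<Rightarrow> 'i set set \<Rightarrow> nat" where
  "num_triangles I E = card {T. T \<subseteq> I \<and> card T = 3 \<and>
       (\<forall>i\<in>T. \<forall>j\<in>T. i \<noteq> j \<longrightarrow> {i, j} \<in> E)}"

definition expected_triangles :: "'i set \<Rightarrow> ('i \<Rightarrow> 'v::real_inner) \<Rightarrow> real" where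
  "expected_triangles I w =
     measure_pmf.expectation (random_graph I w) (\<lambda>E. real (num_triangles I E))"

definition lg :: "real \<Rightarrow> real" where "lg x = log 2 x"

end

theory Submission
  imports Defs
begin

text \<open>By linearity of expectation and independence of edges, the expected number of triangles is
  the sum over all vertex triples of the product of their three edge probabilities. The triangles
  through a fixed vertex \<open>i\<close> weigh at most \<open>c\<^sup>2\<close>, since each of them contains a path \<open>i, j, k\<close>
  and the expected degrees are at most \<open>c\<close>. Hence deleting a set of vertices costs at most
  \<open>c\<^sup>2\<close> per deleted vertex. The norms range over \<open>[n\<^sup>-\<^sup>2, 2\<surd>n]\<close>, so there are at most
  \<open>5.5 lg n\<close> dyadic shells, and the shells below the threshold hold fewer than
  \<open>5.5 lg n \<cdot> \<Delta> n / (60 c\<^sup>2 lg n)\<close> vertices together; deleting them costs less than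
  \<open>11 \<Delta> n / 120 < 3 \<Delta> n / 8\<close>.\<close>

definition three_subsets :: "'i set \<Rightarrow> 'i set set" where
  "three_subsets I = {T. T \<subseteq> I \<and> card T = 3}"

definition triangle_prob :: "('i \<Rightarrow> 'v::real_inner) \<Rightarrow> 'i set \<Rightarrow> real" where
  "triangle_prob w T = (\<Prod>e\<in>vpairs T. pair_prob w e)"

lemma vpairs_eq: "vpairs T = {{i, j} |i j. i \<in> T \<and> j \<in> T \<and> i \<noteq> j}"
  unfolding vpairs_def card_2_iff by blast

lemma finite_vpairs: "finite I \<Longrightarrow> finite (vpairs I)"
  unfolding vpairs_def by (rule finite_subset[of _ "Pow I"]) auto

lemma vpairs_mono: "T \<subseteq> I \<Longrightarrow> vpairs T \<subseteq> vpairs I"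
  unfolding vpairs_def by auto

lemma finite_three_subsets: "finite I \<Longrightarrow> finite (three_subsets I)"
  unfolding three_subsets_def by (rule finite_subset[of _ "Pow I"]) auto

lemma edge_prob_nonneg: "0 \<le> edge_prob w i j"
  and edge_prob_le_1: "edge_prob w i j \<le> 1"
  unfolding edge_prob_def by auto

lemma edge_prob_commute: "edge_prob w i j = edge_prob w j i"
  by (simp add: edge_prob_def inner_commute)

lemma pair_prob_nonneg: "0 \<le> pair_prob w e"
  and pair_prob_le_1: "pair_prob w e \<le> 1"
  unfolding pair_prob_def Let_def by (auto simp: edge_prob_nonneg edge_prob_le_1)

lemma pair_prob_doubleton:
  assumes "a \<noteq> b"
  shows "pair_prob w {a, b} = edge_prob w a b"
proof -
  define i where "i = (SOME i. i \<in> {a, b})"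
  define j where "j = (SOME j. j \<in> {a, b} \<and> j \<noteq> i)"
  have i: "i \<in> {a, b}"
    unfolding i_def by (rule someI[of _ a]) simp
  then have "\<exists>j. j \<in> {a, b} \<and> j \<noteq> i"
    using assms by auto
  then have j: "j \<in> {a, b} \<and> j \<noteq> i"
    unfolding j_def by (rule someI_ex)
  have "pair_prob w {a, b} = edge_prob w i j"
    unfolding pair_prob_def Let_def i_def j_def ..
  also have "\<dots> = edge_prob w a b"
    using i j edge_prob_commute by auto
  finally show ?thesis .
qed

lemma triangle_prob_nonneg: "0 \<le> triangle_prob w T"
  unfolding triangle_prob_def by (intro prod_nonneg) (simp add: pair_prob_nonneg)

lemma triangle_prob_insert3:
  assumes "a \<noteq> b" "a \<noteq> c" "b \<noteq> c"
  shows "triangle_prob w {a, b, c} = edge_prob w a b * edge_prob w a c * edge_prob w b c"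
proof -
  have "vpairs {a, b, c} = {{a, b}, {a, c}, {b, c}}"
    unfolding vpairs_eq using assms by auto
  then show ?thesis
    using assms by (simp add: triangle_prob_def pair_prob_doubleton doubleton_eq_iff)
qed

lemma clique_iff_vpairs_subset:
  "(\<forall>i\<in>T. \<forall>j\<in>T. i \<noteq> j \<longrightarrow> {i, j} \<in> E) \<longleftrightarrow> vpairs T \<subseteq> E"
  unfolding vpairs_eq by blast

lemma num_triangles_eq_card: "num_triangles I E = card {T \<in> three_subsets I. vpairs T \<subseteq> E}"
  unfolding num_triangles_def three_subsets_def clique_iff_vpairs_subset by (simp add: conj_assoc)

lemma prod_of_bool: "finite A \<Longrightarrow> (\<Prod>x\<in>A. of_bool (P x)) = (of_bool (\<forall>x\<in>A. P x) :: 'a::comm_semiring_1)"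
  by (induction A rule: finite_induct) auto

lemma expectation_Pi_pmf_bernoulli_all:
  assumes "finite A" "B \<subseteq> A" "\<And>x. x \<in> B \<Longrightarrow> 0 \<le> p x \<and> p x \<le> 1"
  shows "measure_pmf.expectation (Pi_pmf A False (\<lambda>x. bernoulli_pmf (p x))) (\<lambda>f. of_bool (\<forall>x\<in>B. f x))
           = (\<Prod>x\<in>B. p x)"
proof -
  have fin: "finite B"
    using assms(1,2) finite_subset by blast
  have "measure_pmf.expectation (Pi_pmf A False (\<lambda>x. bernoulli_pmf (p x))) (\<lambda>f. of_bool (\<forall>x\<in>B. f x) :: real)
      = measure_pmf.expectation (Pi_pmf B False (\<lambda>x. bernoulli_pmf (p x))) (\<lambda>f. \<Prod>x\<in>B. of_bool (f x))"
    unfolding Pi_pmf_subset[OF assms(1,2)] by (simp add: prod_of_bool[OF fin])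
  also have "\<dots> = (\<Prod>x\<in>B. measure_pmf.expectation (bernoulli_pmf (p x)) of_bool)"
    by (rule expectation_prod_Pi_pmf[OF fin]) (auto intro: integrable_measure_pmf_finite)
  also have "\<dots> = (\<Prod>x\<in>B. p x)"
    using assms(3) by (intro prod.cong) auto
  finally show ?thesis .
qed

lemma expected_triangles_eq_sum:
  assumes "finite I"
  shows "expected_triangles I w = (\<Sum>T\<in>three_subsets I. triangle_prob w T)"
proof -
  let ?M = "Pi_pmf (vpairs I) False (\<lambda>e. bernoulli_pmf (pair_prob w e))"
  have count: "real (num_triangles I {e \<in> vpairs I. f e})
      = (\<Sum>T\<in>three_subsets I. of_bool (\<forall>e\<in>vpairs T. f e))" for f
  proof -
    have "vpairs T \<subseteq> {e \<in> vpairs I. f e} \<longleftrightarrow> (\<forall>e\<in>vpairs T. f e)" if "T \<in> three_subsets I" for T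
      using that vpairs_mono unfolding three_subsets_def by blast
    then have "{T \<in> three_subsets I. vpairs T \<subseteq> {e \<in> vpairs I. f e}}
        = three_subsets I \<inter> {T. \<forall>e\<in>vpairs T. f e}"
      by blast
    then show ?thesis
      unfolding num_triangles_eq_card by (simp add: finite_three_subsets[OF assms])
  qed
  have "finite (set_pmf ?M)"
    using assms by (auto simp: set_Pi_pmf finite_vpairs)
  then have "expected_triangles I w
      = (\<Sum>T\<in>three_subsets I. measure_pmf.expectation ?M (\<lambda>f. of_bool (\<forall>e\<in>vpairs T. f e)))"
    unfolding expected_triangles_def random_graph_def integral_map_pmf count
    by (intro Bochner_Integration.integral_sum integrable_measure_pmf_finite)
  also have "\<dots> = (\<Sum>T\<in>three_subsets I. triangle_prob w T)"
    unfolding triangle_prob_def three_subsets_def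
    by (intro sum.cong refl expectation_Pi_pmf_bernoulli_all finite_vpairs assms vpairs_mono)
       (auto simp: pair_prob_nonneg pair_prob_le_1)
  finally show ?thesis .
qed

lemma three_subsets_containing_subset_image:
  "{T \<in> three_subsets I. i \<in> T} \<subseteq> (\<lambda>(j, k). {i, j, k}) ` Sigma (I - {i}) (\<lambda>j. I - {i, j})"
proof
  fix T assume "T \<in> {T \<in> three_subsets I. i \<in> T}"
  then have T: "T \<subseteq> I" "card T = 3" "i \<in> T"
    unfolding three_subsets_def by auto
  then have "card (T - {i}) = 2"
    by simp
  then obtain j k where "T - {i} = {j, k}" "j \<noteq> k"
    unfolding card_2_iff by blast
  then have "T = {i, j, k}" "(j, k) \<in> Sigma (I - {i}) (\<lambda>j. I - {i, j})"
    using T by blast+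
  then show "T \<in> (\<lambda>(j, k). {i, j, k}) ` Sigma (I - {i}) (\<lambda>j. I - {i, j})"
    by force
qed

lemma sum_triangle_prob_containing_le:
  assumes fin: "finite I" and "i \<in> I" and deg: "\<forall>j\<in>I. expected_degree I w j \<le> c"
  shows "(\<Sum>T\<in>{T \<in> three_subsets I. i \<in> T}. triangle_prob w T) \<le> c^2"
proof -
  define P where "P = Sigma (I - {i}) (\<lambda>j. I - {i, j})"
  have finP: "finite P"
    unfolding P_def using fin by auto
  have c0: "0 \<le> c"
    using deg \<open>i \<in> I\<close> sum_nonneg[of _ "edge_prob w i", OF edge_prob_nonneg]
    unfolding expected_degree_def by (meson order_trans)
  have "(\<Sum>T\<in>{T \<in> three_subsets I. i \<in> T}. triangle_prob w T)
      \<le> (\<Sum>T\<in>(\<lambda>(j, k). {i, j, k}) ` P. triangle_prob w T)"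
    using three_subsets_containing_subset_image[of I i] finP unfolding P_def
    by (intro sum_mono2 finite_imageI) (auto intro: triangle_prob_nonneg)
  also have "\<dots> \<le> (\<Sum>(j, k)\<in>P. triangle_prob w {i, j, k})"
    using sum_image_le[OF finP, of "triangle_prob w" "\<lambda>(j, k). {i, j, k}"]
    by (simp add: triangle_prob_nonneg case_prod_unfold comp_def)
  also have "\<dots> \<le> (\<Sum>(j, k)\<in>P. edge_prob w i j * edge_prob w j k)"
  proof (intro sum_mono, clarify)
    fix j k assume "(j, k) \<in> P"
    then have "i \<noteq> j" "i \<noteq> k" "j \<noteq> k"
      unfolding P_def by auto
    then have "triangle_prob w {i, j, k} = edge_prob w i j * edge_prob w i k * edge_prob w j k"
      by (rule triangle_prob_insert3)
    also have "\<dots> \<le> edge_prob w i j * 1 * edge_prob w j k"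
      by (intro mult_right_mono mult_left_mono edge_prob_le_1 edge_prob_nonneg)
    finally show "triangle_prob w {i, j, k} \<le> edge_prob w i j * edge_prob w j k"
      by simp
  qed
  also have "\<dots> = (\<Sum>j\<in>I - {i}. edge_prob w i j * (\<Sum>k\<in>I - {i, j}. edge_prob w j k))"
    unfolding P_def using fin by (simp add: sum.Sigma[symmetric] sum_distrib_left)
  also have "\<dots> \<le> (\<Sum>j\<in>I - {i}. edge_prob w i j * c)"
  proof (intro sum_mono mult_left_mono edge_prob_nonneg)
    fix j assume "j \<in> I - {i}"
    have "(\<Sum>k\<in>I - {i, j}. edge_prob w j k) \<le> expected_degree I w j"
      unfolding expected_degree_def using fin by (intro sum_mono2) (auto simp: edge_prob_nonneg)
    with deg \<open>j \<in> I - {i}\<close> show "(\<Sum>k\<in>I - {i, j}. edge_prob w j k) \<le> c"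
      by auto
  qed
  also have "\<dots> = expected_degree I w i * c"
    unfolding expected_degree_def by (simp add: sum_distrib_right)
  also have "\<dots> \<le> c^2"
    using deg \<open>i \<in> I\<close> c0 by (simp add: power2_eq_square mult_right_mono)
  finally show ?thesis .
qed

text \<open>Every triangle lost by passing from \<open>I\<close> to \<open>J\<close> contains a removed vertex.\<close>
lemma expected_triangles_le_subset:
  assumes fin: "finite I" and "J \<subseteq> I" and deg: "\<forall>j\<in>I. expected_degree I w j \<le> c"
  shows "expected_triangles I w \<le> expected_triangles J w + real (card (I - J)) * c^2"
proof -
  have finT: "finite (three_subsets I)"
    using fin by (rule finite_three_subsets)
  have sub: "three_subsets J \<subseteq> three_subsets I"
    using \<open>J \<subseteq> I\<close> unfolding three_subsets_def by auto
  define f where "f i T = (if i \<in> T then triangle_prob w T else 0)" for i T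
  have f0: "0 \<le> f i T" for i T
    unfolding f_def by (simp add: triangle_prob_nonneg)
  have "expected_triangles I w
      = (\<Sum>T\<in>three_subsets I - three_subsets J. triangle_prob w T) + expected_triangles J w"
    using fin \<open>J \<subseteq> I\<close>
    by (simp add: expected_triangles_eq_sum finite_subset sum.subset_diff[OF sub finT])
  also have "(\<Sum>T\<in>three_subsets I - three_subsets J. triangle_prob w T)
      \<le> (\<Sum>T\<in>three_subsets I - three_subsets J. \<Sum>i\<in>I - J. f i T)"
  proof (rule sum_mono)
    fix T assume "T \<in> three_subsets I - three_subsets J"
    then obtain i where i: "i \<in> T" "i \<in> I - J"
      unfolding three_subsets_def by auto
    then have "triangle_prob w T = f i T"
      unfolding f_def by simp
    also have "\<dots> \<le> (\<Sum>i\<in>I - J. f i T)"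
      using i fin f0 by (intro member_le_sum) auto
    finally show "triangle_prob w T \<le> (\<Sum>i\<in>I - J. f i T)" .
  qed
  also have "\<dots> = (\<Sum>i\<in>I - J. \<Sum>T\<in>three_subsets I - three_subsets J. f i T)"
    by (rule sum.swap)
  also have "\<dots> \<le> (\<Sum>i\<in>I - J. c^2)"
  proof (rule sum_mono)
    fix i assume "i \<in> I - J"
    have "(\<Sum>T\<in>three_subsets I - three_subsets J. f i T) \<le> (\<Sum>T\<in>three_subsets I. f i T)"
      using finT f0 by (intro sum_mono2) auto
    also have "\<dots> = (\<Sum>T\<in>{T \<in> three_subsets I. i \<in> T}. triangle_prob w T)"
      unfolding f_def by (rule sum.inter_filter[OF finT, symmetric])
    also have "\<dots> \<le> c^2"
      using fin \<open>i \<in> I - J\<close> deg by (intro sum_triangle_prob_containing_le) auto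
    finally show "(\<Sum>T\<in>three_subsets I - three_subsets J. f i T) \<le> c^2" .
  qed
  finally show ?thesis
    by simp
qed

lemma card_floor_interval_le:
  fixes x y :: real
  assumes "x \<le> y"
  shows "real (card {\<lfloor>x\<rfloor>..\<lfloor>y\<rfloor>}) \<le> y - x + 2"
proof -
  have "\<lfloor>x\<rfloor> \<le> \<lfloor>y\<rfloor>"
    using assms by (rule floor_mono)
  then have "real (card {\<lfloor>x\<rfloor>..\<lfloor>y\<rfloor>}) = real_of_int (\<lfloor>y\<rfloor> - \<lfloor>x\<rfloor> + 1)"
    by simp
  then show ?thesis
    using floor_correct[of x] floor_correct[of y] by linarith
qed

lemma card_outside_large_fibres:
  fixes g :: "'a \<Rightarrow> int" and t :: real
  assumes "finite S" "g ` S \<subseteq> K" "finite K" "0 \<le> t"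
  shows "real (card (S - (\<Union>r\<in>{r. t \<le> real (card {x \<in> S. g x = r})}. {x \<in> S. g x = r})))
           \<le> real (card K) * t"
proof -
  define F where "F r = {x \<in> S. g x = r}" for r
  define R where "R = {r. t \<le> real (card (F r))}"
  have "S - (\<Union>r\<in>R. F r) \<subseteq> (\<Union>r\<in>K - R. F r)"
    using assms(2) unfolding F_def by blast
  then have "card (S - (\<Union>r\<in>R. F r)) \<le> card (\<Union>r\<in>K - R. F r)"
    using assms(1,3) unfolding F_def by (intro card_mono finite_UN_I) auto
  also have "\<dots> \<le> (\<Sum>r\<in>K - R. card (F r))"
    by (rule card_UN_le) (use assms(3) in simp)
  finally have "real (card (S - (\<Union>r\<in>R. F r))) \<le> (\<Sum>r\<in>K - R. real (card (F r)))"
    by (simp flip: of_nat_sum)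
  also have "\<dots> \<le> (\<Sum>r\<in>K - R. t)"
    by (rule sum_mono) (simp add: R_def)
  also have "\<dots> \<le> real (card K) * t"
    using assms(3,4) by (simp add: card_mono mult_right_mono)
  finally show ?thesis
    unfolding R_def F_def .
qed

text \<open>The shell containing \<open>v i\<close> has index \<open>\<lfloor>log 2 \<parallel>v i\<parallel>\<rfloor>\<close>.\<close>
lemma card_outside_large_dyadic_shells:
  fixes v :: "'i \<Rightarrow> 'v::real_normed_vector" and t :: real
  assumes "finite I" "0 < lo" "lo \<le> hi" "\<forall>i\<in>I. lo \<le> norm (v i) \<and> norm (v i) \<le> hi" "0 \<le> t"
  defines "V \<equiv> \<lambda>r::int. {i \<in> I. 2 powr real_of_int r \<le> norm (v i) \<and> norm (v i) < 2 powr (real_of_int r + 1)}"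
  shows "real (card (I - (\<Union>r\<in>{r. t \<le> real (card (V r))}. V r))) \<le> (log 2 hi - log 2 lo + 2) * t"
proof -
  let ?g = "\<lambda>i. \<lfloor>log 2 (norm (v i))\<rfloor>"
  have pos: "0 < norm (v i)" if "i \<in> I" for i
    using that assms(4) less_le_trans[OF assms(2)] by blast
  then have V_eq: "V r = {i \<in> I. ?g i = r}" for r
    unfolding V_def by (intro Collect_cong conj_cong refl) (simp add: floor_log_eq_powr_iff)
  have "?g ` I \<subseteq> {\<lfloor>log 2 lo\<rfloor>..\<lfloor>log 2 hi\<rfloor>}"
  proof
    fix y assume "y \<in> ?g ` I"
    then obtain i where "i \<in> I" "y = ?g i"
      by blast
    then have "lo \<le> norm (v i)" "norm (v i) \<le> hi" "0 < norm (v i)"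
      using assms(4) pos by auto
    then have "log 2 lo \<le> log 2 (norm (v i))" "log 2 (norm (v i)) \<le> log 2 hi"
      using assms(2) by simp_all
    then show "y \<in> {\<lfloor>log 2 lo\<rfloor>..\<lfloor>log 2 hi\<rfloor>}"
      using \<open>y = ?g i\<close> by (simp add: floor_mono)
  qed
  then have "real (card (I - (\<Union>r\<in>{r. t \<le> real (card (V r))}. V r)))
      \<le> real (card {\<lfloor>log 2 lo\<rfloor>..\<lfloor>log 2 hi\<rfloor>}) * t"
    unfolding V_eq using assms(1,5) by (intro card_outside_large_fibres) auto
  also have "\<dots> \<le> (log 2 hi - log 2 lo + 2) * t"
    using assms(2,3,5) by (intro mult_right_mono card_floor_interval_le) auto
  finally show ?thesis .
qed

lemma card_outside_large_dyadic_shells_lg: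
  fixes v :: "'i \<Rightarrow> 'v::real_normed_vector" and t :: real
  assumes "n \<ge> 2" "finite I" "\<forall>i\<in>I. 1 / (real n)^2 \<le> norm (v i) \<and> norm (v i) \<le> 2 * sqrt (real n)"
    and "0 \<le> t"
  defines "V \<equiv> \<lambda>r::int. {i \<in> I. 2 powr real_of_int r \<le> norm (v i) \<and> norm (v i) < 2 powr (real_of_int r + 1)}"
  shows "real (card (I - (\<Union>r\<in>{r. t \<le> real (card (V r))}. V r))) \<le> 11 / 2 * lg (real n) * t"
proof -
  have lg: "1 \<le> lg (real n)" "log 2 (1 / (real n)^2) = - 2 * lg (real n)"
    "log 2 (2 * sqrt (real n)) = 1 + lg (real n) / 2"
    using assms(1) by (simp_all add: lg_def log_divide log_nat_power log_mult sqrt_def log_root)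
  have norm_range: "0 < 1 / (real n)^2" "1 / (real n)^2 \<le> 2 * sqrt (real n)"
  proof -
    show "0 < 1 / (real n)^2"
      using assms(1) by simp
    have "1 / (real n)^2 \<le> 1" "1 \<le> sqrt (real n)"
      using assms(1) by auto
    then show "1 / (real n)^2 \<le> 2 * sqrt (real n)"
      by linarith
  qed
  have "real (card (I - (\<Union>r\<in>{r. t \<le> real (card (V r))}. V r)))
      \<le> (log 2 (2 * sqrt (real n)) - log 2 (1 / (real n)^2) + 2) * t"
    unfolding V_def by (rule card_outside_large_dyadic_shells[OF assms(2) norm_range assms(3,4)])
  also have "\<dots> = (3 + 5 / 2 * lg (real n)) * t"
    using lg by simp
  also have "\<dots> \<le> 11 / 2 * lg (real n) * t"
    using lg(1) assms(4) by (intro mult_right_mono) auto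
  finally show ?thesis .
qed

theorem mainTheorem7:
  fixes n :: nat and c \<Delta> :: real and I :: "'i set" and v :: "'i \<Rightarrow> 'v::euclidean_space"
  assumes "n \<ge> 2" and "c \<ge> 1" and "\<Delta> > 0"
    and "finite I" and "card I \<le> n"
    and "\<forall>i\<in>I. 1 / (real n)^2 \<le> norm (v i) \<and> norm (v i) \<le> 2 * sqrt (real n)"
    and "\<forall>i\<in>I. expected_degree I v i \<le> c"
    and "expected_triangles I v \<ge> \<Delta> * real n / 2"
  shows "let Vr = (\<lambda>r::int. {i \<in> I. 2 powr (real_of_int r) \<le> norm (v i)
                                 \<and> norm (v i) < 2 powr (real_of_int r + 1)});
             R = {r::int. real (card (Vr r)) \<ge> (\<Delta> / (60 * c^2)) * (real n / lg (real n))};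
             I'' = (\<Union>r\<in>R. Vr r)
         in expected_triangles I'' v \<ge> \<Delta> * real n / 8"
proof -
  define t where "t = (\<Delta> / (60 * c^2)) * (real n / lg (real n))"
  define Vr where "Vr r = {i \<in> I. 2 powr (real_of_int r) \<le> norm (v i) \<and> norm (v i) < 2 powr (real_of_int r + 1)}"
    for r :: int
  define I'' where "I'' = (\<Union>r\<in>{r. t \<le> real (card (Vr r))}. Vr r)"
  have lg: "1 \<le> lg (real n)"
    using assms(1) by (simp add: lg_def)
  then have "real (card (I - I'')) \<le> 11 / 2 * lg (real n) * t"
    unfolding I''_def Vr_def using assms(1,3,4,6)
    by (intro card_outside_large_dyadic_shells_lg) (simp_all add: t_def)
  then have "real (card (I - I'')) * c^2 \<le> 11 / 2 * lg (real n) * t * c^2"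
    by (rule mult_right_mono) simp
  also have "\<dots> = 11 / 120 * \<Delta> * real n"
    using lg assms(2) by (simp add: t_def field_simps power2_eq_square)
  finally have "expected_triangles I v \<le> expected_triangles I'' v + 11 / 120 * \<Delta> * real n"
    using expected_triangles_le_subset[of I I'' v c] assms(4,7) unfolding I''_def Vr_def by force
  moreover have "0 \<le> \<Delta> * real n"
    using assms(3) by simp
  ultimately have "\<Delta> * real n / 8 \<le> expected_triangles I'' v"
    using assms(8) by linarith
  then show ?thesis
    unfolding Let_def I''_def Vr_def t_def by simp
qed

end
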